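(* Let $u$ and $v$ be linear functionals on $\mathbb C[\boldsymbol x]$ and $\hat u=u+v$, with $u$ and $\hat u$ quasi-definite. Then for every $n\in\mathbb Z_+$ $$\hat P_{[n]}(\boldsymbol x)=P_{[n]}(\boldsymbol x)-\big\langle v,\hat P_{[n]}(\boldsymbol y)K_{n-1}(\boldsymbol y,\boldsymbol x)\big\rangle,\qquad \hat H_{[n]}=H_{[n]}+\big\langle v,\hat P_{[n]}(\boldsymbol x)\big(P_{[n]}(\boldsymbol x)\big)^\top\big\rangle,$$ where $v$ acts on the variable $\boldsymbol y$ in the first formula.
   Context: Multi-indices ordered by graded lexicographic order; $\chi(\boldsymbol x)$ the semi-infinite vector of monomials with blocks $\chi_{[k]}=(\boldsymbol x^{\boldsymbol\alpha})_{|\boldsymbol\alpha|=k}$. For a linear functional $u$ on $\mathbb C[\boldsymbol x]$ (applied entrywise to matrices), moment matrix $G=\langle u,\chi\chi^\top\rangle$; $u$ is quasi-definite if all block truncations $G^{[k]}$ (block rows/columns $0,\dots,k-1$) are nonsingular; then $G=S^{-1}HS^{-\top}$ with $S$ block lower unitriangular, $H$ block diagonal with blocks $H_{[k]}$, and $P=S\chi$ with blocks $P_{[k]}$ are the monic multivariate orthogonal polynomials. Hatted objects refer to $\hat u$. Christoffel–Darboux kernel $K_n(\boldsymbol x,\boldsymbol y)=\sum_{m=0}^n P_{[m]}(\boldsymbol x)^\top H_{[m]}^{-1}P_{[m]}(\boldsymbol y)$, $K_{-1}=0$. *)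

theory Defs
  imports "HOL-Library.Poly_Mapping" "Jordan_Normal_Form.Determinant"
    "Jordan_Normal_Form.Gauss_Jordan_Elimination"
begin

text \<open>Multivariate polynomials in the variables indexed by a finite linearly ordered
 type 'v (so the dimension is D = CARD('v)); monomials x^alpha are multi-indices
 alpha :: 'v =>0 nat; a polynomial maps monomials to complex coefficients.\<close>

type_synonym 'v mpoly = "('v \<Rightarrow>\<^sub>0 nat) \<Rightarrow>\<^sub>0 complex"

definition mdeg :: "('v::finite \<Rightarrow>\<^sub>0 nat) \<Rightarrow> nat" where
  "mdeg \<alpha> = (\<Sum>i\<in>UNIV. Poly_Mapping.lookup \<alpha> i)"

text \<open>Lexicographic comparison: alpha comes before beta (alpha has the larger
 exponent at the first variable where they differ), so x_1^k comes first.\<close>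
definition lex_before :: "('v::linorder \<Rightarrow>\<^sub>0 nat) \<Rightarrow> ('v \<Rightarrow>\<^sub>0 nat) \<Rightarrow> bool" where
  "lex_before \<alpha> \<beta> \<longleftrightarrow> (\<exists>i. Poly_Mapping.lookup \<beta> i < Poly_Mapping.lookup \<alpha> i \<and> (\<forall>j<i. Poly_Mapping.lookup \<alpha> j = Poly_Mapping.lookup \<beta> j))"

definition glex_monos :: "nat \<Rightarrow> ('v::{finite,linorder} \<Rightarrow>\<^sub>0 nat) list" where
  "glex_monos k = (THE xs. distinct xs \<and> set xs = {\<alpha>. mdeg \<alpha> = k} \<and> sorted_wrt lex_before xs)"

definition bsize :: "'v::{finite,linorder} itself \<Rightarrow> nat \<Rightarrow> nat" where
  "bsize _ k = length (glex_monos k :: ('v \<Rightarrow>\<^sub>0 nat) list)"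

definition chi :: "nat \<Rightarrow> nat \<Rightarrow> 'v::{finite,linorder} mpoly" where
  "chi k i = Poly_Mapping.single (glex_monos k ! i) 1"

definition cpoly :: "complex \<Rightarrow> 'v mpoly" where
  "cpoly c = Poly_Mapping.single 0 c"

definition eval_mpoly :: "'v::finite mpoly \<Rightarrow> ('v \<Rightarrow> complex) \<Rightarrow> complex" where
  "eval_mpoly p x = (\<Sum>\<alpha>\<in>Poly_Mapping.keys p. Poly_Mapping.lookup p \<alpha> * (\<Prod>i\<in>UNIV. x i ^ Poly_Mapping.lookup \<alpha> i))"

definition linear_functional :: "('v mpoly \<Rightarrow> complex) \<Rightarrow> bool" where
  "linear_functional u \<longleftrightarrow> (\<forall>p q. u (p + q) = u p + u q) \<and> (\<forall>c p. u (cpoly c * p) = c * u p)"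

definition Gblock :: "('v::{finite,linorder} mpoly \<Rightarrow> complex) \<Rightarrow> nat \<Rightarrow> nat \<Rightarrow> complex mat" where
  "Gblock u k l = mat (bsize TYPE('v) k) (bsize TYPE('v) l) (\<lambda>(i,j). u (chi k i * chi l j))"

text \<open>Global indexing of chi: offset of block k, block and position of a global index.\<close>
definition boff :: "'v::{finite,linorder} itself \<Rightarrow> nat \<Rightarrow> nat" where
  "boff T k = (\<Sum>m<k. bsize T m)"

definition blk :: "'v::{finite,linorder} itself \<Rightarrow> nat \<Rightarrow> nat" where
  "blk T i = (LEAST k. i < boff T (Suc k))"

text \<open>Block truncation G^[k] (block rows/columns 0..k-1).\<close>
definition Gtrunc :: "('v::{finite,linorder} mpoly \<Rightarrow> complex) \<Rightarrow> nat \<Rightarrow> complex mat" where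
  "Gtrunc u k = mat (boff TYPE('v) k) (boff TYPE('v) k)
     (\<lambda>(i,j). Gblock u (blk TYPE('v) i) (blk TYPE('v) j) $$
                (i - boff TYPE('v) (blk TYPE('v) i), j - boff TYPE('v) (blk TYPE('v) j)))"

definition quasi_definite :: "('v::{finite,linorder} mpoly \<Rightarrow> complex) \<Rightarrow> bool" where
  "quasi_definite u \<longleftrightarrow> (\<forall>k. det (Gtrunc u k) \<noteq> 0)"

text \<open>Block factorization G = S^{-1} H S^{-T}, written equivalently as S G S^T = H
 (S is block lower unitriangular, hence invertible; all block sums are finite):
 S k l is the (k,l) block of S and H k the k-th diagonal block of H.\<close>
definition is_factorization ::
  "('v::{finite,linorder} mpoly \<Rightarrow> complex) \<Rightarrow> (nat \<Rightarrow> nat \<Rightarrow> complex mat) \<Rightarrow> (nat \<Rightarrow> complex mat) \<Rightarrow> bool" where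
  "is_factorization u S H \<longleftrightarrow>
     (\<forall>k l. S k l \<in> carrier_mat (bsize TYPE('v) k) (bsize TYPE('v) l)) \<and>
     (\<forall>k. S k k = 1\<^sub>m (bsize TYPE('v) k)) \<and>
     (\<forall>k l. k < l \<longrightarrow> S k l = 0\<^sub>m (bsize TYPE('v) k) (bsize TYPE('v) l)) \<and>
     (\<forall>k. H k \<in> carrier_mat (bsize TYPE('v) k) (bsize TYPE('v) k)) \<and>
     (\<forall>k l i j. i < bsize TYPE('v) k \<longrightarrow> j < bsize TYPE('v) l \<longrightarrow>
        (\<Sum>a\<le>k. \<Sum>b\<le>l. (S k a * Gblock u a b * (S l b)\<^sup>T) $$ (i,j)) =
        (if k = l then H k $$ (i,j) else 0))"

definition Sfac :: "('v::{finite,linorder} mpoly \<Rightarrow> complex) \<Rightarrow> nat \<Rightarrow> nat \<Rightarrow> complex mat" where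
  "Sfac u = (THE S. \<exists>H. is_factorization u S H)"

definition Hfac :: "('v::{finite,linorder} mpoly \<Rightarrow> complex) \<Rightarrow> nat \<Rightarrow> complex mat" where
  "Hfac u = (THE H. \<exists>S. is_factorization u S H)"

text \<open>The block P_[n] = sum_{m<=n} S_{[n],[m]} chi_[m] of the monic MOPs P = S chi.\<close>
definition MOP :: "('v::{finite,linorder} mpoly \<Rightarrow> complex) \<Rightarrow> nat \<Rightarrow> 'v mpoly vec" where
  "MOP u n = vec (bsize TYPE('v) n)
     (\<lambda>i. \<Sum>m\<le>n. \<Sum>j<bsize TYPE('v) m. cpoly (Sfac u n m $$ (i,j)) * chi m j)"

text \<open>Christoffel--Darboux kernel K_{n-1}(y,x) = sum_{m<n} P_[m](y)^T H_[m]^{-1} P_[m](x),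
 for a fixed point x, as a polynomial in y (K_{-1} = 0 is the case n = 0).\<close>
definition CD_kernel_y :: "('v::{finite,linorder} mpoly \<Rightarrow> complex) \<Rightarrow> nat \<Rightarrow> ('v \<Rightarrow> complex) \<Rightarrow> 'v mpoly" where
  "CD_kernel_y u n x = (\<Sum>m<n. \<Sum>a<bsize TYPE('v) m. \<Sum>b<bsize TYPE('v) m.
      MOP u m $ a * cpoly (the (mat_inverse (Hfac u m)) $$ (a,b) * eval_mpoly (MOP u m $ b) x))"

end

theory Submission
  imports Defs
begin

text \<open>Both families of orthogonal polynomials are monic, so \<open>\<hat>P\<^sub>[\<^sub>n\<^sub>] - P\<^sub>[\<^sub>n\<^sub>]\<close> has degree
 below \<open>n\<close> and is a combination of the \<open>P\<^sub>[\<^sub>m\<^sub>]\<close>, \<open>m < n\<close>. Its coefficients are read off with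
 \<open>u\<close>-orthogonality: since \<open>\<hat>P\<^sub>[\<^sub>n\<^sub>]\<close> is \<open>\<hat>u\<close>-orthogonal to everything of lower degree,
 \<open>\<langle>u, \<hat>P\<^sub>[\<^sub>n\<^sub>] P\<^sub>[\<^sub>m\<^sub>]\<^sup>T\<rangle> = -\<langle>v, \<hat>P\<^sub>[\<^sub>n\<^sub>] P\<^sub>[\<^sub>m\<^sub>]\<^sup>T\<rangle>\<close>, and multiplying by \<open>H\<^sub>[\<^sub>m\<^sub>]\<^sup>-\<^sup>1\<close> gives exactly the
 Christoffel--Darboux kernel. Likewise
 \<open>\<hat>H\<^sub>[\<^sub>n\<^sub>] = \<langle>\<hat>u, \<hat>P\<^sub>[\<^sub>n\<^sub>] \<hat>P\<^sub>[\<^sub>n\<^sub>]\<^sup>T\<rangle> = \<langle>\<hat>u, \<hat>P\<^sub>[\<^sub>n\<^sub>] P\<^sub>[\<^sub>n\<^sub>]\<^sup>T\<rangle> = \<langle>u, P\<^sub>[\<^sub>n\<^sub>] P\<^sub>[\<^sub>n\<^sub>]\<^sup>T\<rangle> + \<langle>v, \<hat>P\<^sub>[\<^sub>n\<^sub>] P\<^sub>[\<^sub>n\<^sub>]\<^sup>T\<rangle>\<close>.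
 Since \<open>S\<close> and \<open>H\<close> are given by a definite description, one also needs that the
 factorization exists and is unique; both follow from the invertibility of the truncated moment
 matrices, which makes the orthogonality conditions a uniquely solvable linear system.\<close>

lemma linear_functional_add: "linear_functional u \<Longrightarrow> u (p + q) = u p + u q"
  by (simp add: linear_functional_def)

lemma linear_functional_cpoly_mult: "linear_functional u \<Longrightarrow> u (cpoly c * p) = c * u p"
  by (simp add: linear_functional_def)

lemma linear_functional_zero: "linear_functional u \<Longrightarrow> u 0 = 0"
  using linear_functional_add[of u 0 0] by simp

lemma linear_functional_uminus: "linear_functional u \<Longrightarrow> u (- p) = - u p"
  using linear_functional_add[of u p "-p"] linear_functional_zero[of u]
  by (simp add: eq_neg_iff_add_eq_0 add.commute)

lemma linear_functional_diff: "linear_functional u \<Longrightarrow> u (p - q) = u p - u q"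
  using linear_functional_add[of u p "-q"] linear_functional_uminus[of u q] by simp

lemma linear_functional_sum: "linear_functional u \<Longrightarrow> u (\<Sum>x\<in>A. f x) = (\<Sum>x\<in>A. u (f x))"
  by (induction A rule: infinite_finite_induct) (auto simp: linear_functional_zero linear_functional_add)

lemma linear_functional_plus:
  "linear_functional u \<Longrightarrow> linear_functional v \<Longrightarrow> linear_functional (\<lambda>p. u p + v p)"
  by (simp add: linear_functional_def algebra_simps)

lemma cpoly_mult: "cpoly a * cpoly b = cpoly (a * b)"
  by (simp add: cpoly_def mult_single)

lemma cpoly_add: "cpoly a + cpoly b = cpoly (a + b)"
  by (simp add: cpoly_def single_add)

lemma cpoly_diff: "cpoly a - cpoly b = cpoly (a - b)"
  by (simp add: cpoly_def single_diff)

lemma cpoly_0 [simp]: "cpoly 0 = 0"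
  by (simp add: cpoly_def)

lemma cpoly_1 [simp]: "cpoly 1 = 1"
  by (simp add: cpoly_def)

lemma lookup_cpoly_mult: "Poly_Mapping.lookup (cpoly c * p) a = c * Poly_Mapping.lookup p a"
  unfolding cpoly_def lookup_mult lookup_single
  by (simp add: when_mult Sum_any_right_distrib[symmetric] mult_when)

lemma eval_mpoly_superset_keys:
  assumes "finite A" "Poly_Mapping.keys p \<subseteq> A"
  shows "eval_mpoly p x = (\<Sum>a\<in>A. Poly_Mapping.lookup p a * (\<Prod>i\<in>UNIV. x i ^ Poly_Mapping.lookup a i))"
  unfolding eval_mpoly_def
  by (rule sum.mono_neutral_left[OF assms]) (auto simp: in_keys_iff)

lemma linear_functional_eval_mpoly: "linear_functional (\<lambda>p. eval_mpoly p x)"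
  unfolding linear_functional_def
proof (intro conjI allI)
  fix p q :: "'a mpoly"
  let ?A = "Poly_Mapping.keys p \<union> Poly_Mapping.keys q"
  have A: "finite ?A" by simp
  show "eval_mpoly (p + q) x = eval_mpoly p x + eval_mpoly q x"
    unfolding eval_mpoly_superset_keys[OF A keys_add] eval_mpoly_superset_keys[OF A Un_upper1]
      eval_mpoly_superset_keys[OF A Un_upper2]
    by (simp add: lookup_add distrib_right sum.distrib)
next
  fix c and p :: "'a mpoly"
  have K: "Poly_Mapping.keys (cpoly c * p) \<subseteq> Poly_Mapping.keys p"
    by (auto simp: in_keys_iff lookup_cpoly_mult)
  show "eval_mpoly (cpoly c * p) x = c * eval_mpoly p x"
    unfolding eval_mpoly_superset_keys[OF finite_keys K]
      eval_mpoly_superset_keys[of "Poly_Mapping.keys p" p, OF finite_keys order.refl]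
    by (simp add: lookup_cpoly_mult sum_distrib_left mult.assoc)
qed

lemma boff_Suc: "boff T (Suc k) = boff T k + bsize T k"
  by (simp add: boff_def)

lemma boff_mono: "k \<le> l \<Longrightarrow> boff T k \<le> boff T l"
  unfolding boff_def by (rule sum_mono2) auto

lemma boff_add_less: "m < N \<Longrightarrow> j < bsize T m \<Longrightarrow> boff T m + j < boff T N"
  using boff_mono[of "Suc m" N T] by (simp add: boff_Suc)

lemma blk_boff_add:
  assumes "j < bsize T m"
  shows "blk T (boff T m + j) = m"
  unfolding blk_def
proof (rule Least_equality)
  show "boff T m + j < boff T (Suc m)" using assms by (simp add: boff_Suc)
next
  fix k assume "boff T m + j < boff T (Suc k)"
  then show "m \<le> k" using boff_mono[of "Suc k" m T] by (cases "m \<le> k") auto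
qed

lemma less_boff_cases:
  assumes "h < boff T N"
  obtains k c where "k < N" "c < bsize T k" "h = boff T k + c"
  using assms
proof (induction N)
  case 0 then show ?case by (simp add: boff_def)
next
  case (Suc N)
  show ?case
  proof (cases "h < boff T N")
    case True with Suc show ?thesis by (meson less_SucI)
  next
    case False
    then show ?thesis using Suc.prems(1)[of N "h - boff T N"] Suc.prems(2) by (simp add: boff_Suc)
  qed
qed

lemma sum_lessThan_add_split: "(\<Sum>g<a + (b::nat). f g) = (\<Sum>g<a. f g) + (\<Sum>j<b. f (a + j))"
  by (induction b) (auto simp: add.assoc)

lemma sum_lessThan_boff: "(\<Sum>g<boff T N. f g) = (\<Sum>m<N. \<Sum>j<bsize T m. f (boff T m + j))"
  by (induction N) (simp_all add: boff_def boff_Suc[unfolded boff_def] sum_lessThan_add_split)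

lemma Gtrunc_boff_entry:
  fixes u :: "'v::{finite,linorder} mpoly \<Rightarrow> complex"
  assumes "m < N" "j < bsize TYPE('v) m" "k < N" "c < bsize TYPE('v) k"
  shows "Gtrunc u N $$ (boff TYPE('v) m + j, boff TYPE('v) k + c) = u (chi m j * chi k c)"
  using assms boff_add_less[of m N j "TYPE('v)"] boff_add_less[of k N c "TYPE('v)"]
  by (simp add: Gtrunc_def blk_boff_add Gblock_def)

section \<open>Polynomials of degree below \<open>N\<close>\<close>

definition chi_comb :: "nat \<Rightarrow> (nat \<Rightarrow> nat \<Rightarrow> complex) \<Rightarrow> 'v::{finite,linorder} mpoly" where
  "chi_comb N d = (\<Sum>m<N. \<Sum>j<bsize TYPE('v) m. cpoly (d m j) * chi m j)"

definition deg_less :: "nat \<Rightarrow> 'v::{finite,linorder} mpoly \<Rightarrow> bool" where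
  "deg_less N q \<longleftrightarrow> (\<exists>d. q = chi_comb N d)"

lemma functional_chi_comb_mult:
  fixes u :: "'v::{finite,linorder} mpoly \<Rightarrow> complex"
  assumes "linear_functional u"
  shows "u (chi_comb N d * q) = (\<Sum>m<N. \<Sum>j<bsize TYPE('v) m. d m j * u (chi m j * q))"
  unfolding chi_comb_def sum_distrib_right
  by (simp add: linear_functional_sum[OF assms] mult.assoc linear_functional_cpoly_mult[OF assms])

lemma functional_mult_chi_comb:
  fixes u :: "'v::{finite,linorder} mpoly \<Rightarrow> complex"
  assumes "linear_functional u"
  shows "u (q * chi_comb N d) = (\<Sum>m<N. \<Sum>j<bsize TYPE('v) m. d m j * u (chi m j * q))"
  using functional_chi_comb_mult[OF assms] by (simp add: mult.commute)

lemma chi_comb_add: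
  "chi_comb N d1 + chi_comb N d2 = (chi_comb N (\<lambda>m j. d1 m j + d2 m j) :: 'v::{finite,linorder} mpoly)"
  unfolding chi_comb_def by (simp add: sum.distrib[symmetric] distrib_right cpoly_add[symmetric])

lemma chi_comb_diff:
  "chi_comb N d1 - chi_comb N d2 = (chi_comb N (\<lambda>m j. d1 m j - d2 m j) :: 'v::{finite,linorder} mpoly)"
  unfolding chi_comb_def by (simp add: sum_subtractf[symmetric] left_diff_distrib cpoly_diff[symmetric])

lemma cpoly_mult_chi_comb:
  "cpoly c * chi_comb N d = (chi_comb N (\<lambda>m j. c * d m j) :: 'v::{finite,linorder} mpoly)"
  unfolding chi_comb_def by (simp add: sum_distrib_left mult.assoc[symmetric] cpoly_mult)

lemma chi_comb_zero: "chi_comb N (\<lambda>m j. 0) = (0 :: 'v::{finite,linorder} mpoly)"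
  unfolding chi_comb_def by simp

lemma sum_chi_comb:
  "(\<Sum>x\<in>A. chi_comb N (d x)) = (chi_comb N (\<lambda>m j. \<Sum>x\<in>A. d x m j) :: 'v::{finite,linorder} mpoly)"
  by (induction A rule: infinite_finite_induct) (auto simp: chi_comb_zero chi_comb_add)

lemma chi_comb_Suc:
  "chi_comb (Suc N) d = chi_comb N d + (\<Sum>j<bsize TYPE('v) N. cpoly (d N j) * chi N j :: 'v::{finite,linorder} mpoly)"
  unfolding chi_comb_def by simp

lemma chi_comb_extend:
  assumes "N \<le> M"
  shows "chi_comb N d = (chi_comb M (\<lambda>m j. if m < N then d m j else 0) :: 'v::{finite,linorder} mpoly)"
  using assms
proof (induction M)
  case 0 then show ?case by (simp add: chi_comb_def)
next
  case (Suc M)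
  show ?case
  proof (cases "N \<le> M")
    case True
    then show ?thesis using Suc.IH by (simp add: chi_comb_Suc)
  next
    case False
    then have "N = Suc M" using Suc.prems by simp
    then show ?thesis unfolding chi_comb_def by (intro sum.cong) auto
  qed
qed

lemma deg_less_add: "deg_less N p \<Longrightarrow> deg_less N q \<Longrightarrow> deg_less N (p + q)"
  unfolding deg_less_def by (auto simp: chi_comb_add)

lemma deg_less_cpoly_mult: "deg_less N p \<Longrightarrow> deg_less N (cpoly c * p)"
  unfolding deg_less_def by (auto simp: cpoly_mult_chi_comb)

lemma deg_less_zero: "deg_less N 0"
  unfolding deg_less_def using chi_comb_zero[symmetric] by blast

lemma deg_less_sum: "(\<And>x. x \<in> A \<Longrightarrow> deg_less N (f x)) \<Longrightarrow> deg_less N (\<Sum>x\<in>A. f x)"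
  by (induction A rule: infinite_finite_induct) (auto simp: deg_less_zero deg_less_add)

lemma functional_mult_chi_comb_eq_0:
  fixes u :: "'v::{finite,linorder} mpoly \<Rightarrow> complex"
  assumes "linear_functional u"
    and "\<forall>l<k. \<forall>c<bsize TYPE('v) l. u (p * chi l c) = 0" and "N \<le> k"
  shows "u (p * chi_comb N d) = 0"
  unfolding functional_mult_chi_comb[OF assms(1)]
  using assms(2,3) by (intro sum.neutral ballI) (auto simp: mult.commute)

text \<open>The coefficients \<open>d\<close>, flattened to one vector, lie in the kernel of \<open>G\<^sup>[\<^sup>N\<^sup>]\<close>.\<close>

lemma quasi_definite_orthogonal_chi_comb_coeff:
  fixes u :: "'v::{finite,linorder} mpoly \<Rightarrow> complex"
  assumes lf: "linear_functional u" and qd: "quasi_definite u"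
    and orth: "\<forall>k<N. \<forall>c<bsize TYPE('v) k. u (chi_comb N d * chi k c) = 0"
    and mj: "m < N" "j < bsize TYPE('v) m"
  shows "d m j = 0"
proof -
  define w where
    "w = vec (boff TYPE('v) N) (\<lambda>g. d (blk TYPE('v) g) (g - boff TYPE('v) (blk TYPE('v) g)))"
  have w_boff: "w $ (boff TYPE('v) m' + j') = d m' j'" if "m' < N" "j' < bsize TYPE('v) m'" for m' j'
    using that boff_add_less[OF that] by (simp add: w_def blk_boff_add)
  have G: "Gtrunc u N \<in> carrier_mat (boff TYPE('v) N) (boff TYPE('v) N)"
    by (simp add: Gtrunc_def)
  have w: "w \<in> carrier_vec (boff TYPE('v) N)" by (simp add: w_def)
  have "Gtrunc u N *\<^sub>v w = 0\<^sub>v (boff TYPE('v) N)"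
  proof (rule eq_vecI)
    fix h assume "h < dim_vec (0\<^sub>v (boff TYPE('v) N) :: complex vec)"
    then have h: "h < boff TYPE('v) N" by simp
    then obtain k c where kc: "k < N" "c < bsize TYPE('v) k" "h = boff TYPE('v) k + c"
      by (rule less_boff_cases)
    have "(Gtrunc u N *\<^sub>v w) $ h = (\<Sum>g<boff TYPE('v) N. Gtrunc u N $$ (h, g) * w $ g)"
      using h G w by (simp add: scalar_prod_def atLeast0LessThan)
    also have "\<dots> = (\<Sum>m'<N. \<Sum>j'<bsize TYPE('v) m'.
        Gtrunc u N $$ (h, boff TYPE('v) m' + j') * w $ (boff TYPE('v) m' + j'))"
      by (rule sum_lessThan_boff)
    also have "\<dots> = (\<Sum>m'<N. \<Sum>j'<bsize TYPE('v) m'. d m' j' * u (chi m' j' * chi k c))"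
      using kc by (intro sum.cong refl) (simp add: Gtrunc_boff_entry w_boff mult.commute)
    also have "\<dots> = 0" using orth kc by (simp add: functional_chi_comb_mult[OF lf])
    finally show "(Gtrunc u N *\<^sub>v w) $ h = 0\<^sub>v (boff TYPE('v) N) $ h" using h by simp
  qed (simp add: Gtrunc_def)
  moreover have "det (Gtrunc u N) \<noteq> 0" using qd by (simp add: quasi_definite_def)
  ultimately have "w = 0\<^sub>v (boff TYPE('v) N)" using det_0_iff_vec_prod_zero[OF G] w by blast
  then show ?thesis using w_boff[OF mj] boff_add_less[OF mj] by simp
qed

section \<open>Orthogonal polynomials of a block factorization\<close>

definition MOP_of :: "(nat \<Rightarrow> nat \<Rightarrow> complex mat) \<Rightarrow> nat \<Rightarrow> nat \<Rightarrow> 'v::{finite,linorder} mpoly" where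
  "MOP_of S k i = chi_comb (Suc k) (\<lambda>m j. S k m $$ (i,j))"

lemma MOP_eq_MOP_of:
  fixes u :: "'v::{finite,linorder} mpoly \<Rightarrow> complex"
  assumes "i < bsize TYPE('v) n"
  shows "MOP u n $ i = MOP_of (Sfac u) n i"
  using assms by (simp add: MOP_def MOP_of_def chi_comb_def lessThan_Suc_atMost)

lemma deg_less_MOP_of: "m < N \<Longrightarrow> deg_less N (MOP_of S m b)"
  unfolding deg_less_def MOP_of_def using chi_comb_extend[of "Suc m" N] by auto

lemma MOP_of_unitriangular:
  assumes "S k k = 1\<^sub>m (bsize TYPE('v::{finite,linorder}) k)" "i < bsize TYPE('v) k"
  shows "(MOP_of S k i :: 'v mpoly) = chi_comb k (\<lambda>m j. S k m $$ (i,j)) + chi k i"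
proof -
  have "(\<Sum>j<bsize TYPE('v) k. cpoly (S k k $$ (i,j)) * (chi k j :: 'v mpoly)) =
        (\<Sum>j<bsize TYPE('v) k. if j = i then chi k j else 0)"
    using assms by (intro sum.cong) auto
  also have "\<dots> = chi k i" using assms by simp
  finally show ?thesis unfolding MOP_of_def chi_comb_Suc by simp
qed

lemma is_factorization_diag:
  fixes u :: "'v::{finite,linorder} mpoly \<Rightarrow> complex"
  shows "is_factorization u S H \<Longrightarrow> S k k = 1\<^sub>m (bsize TYPE('v) k)"
  by (simp add: is_factorization_def)

lemma MOP_of_diff:
  fixes u u' :: "'v::{finite,linorder} mpoly \<Rightarrow> complex"
  assumes "is_factorization u S H" "is_factorization u' S' H'" "i < bsize TYPE('v) k"
  shows "(MOP_of S k i :: 'v mpoly) - MOP_of S' k i =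
    chi_comb k (\<lambda>m j. S k m $$ (i,j) - S' k m $$ (i,j))"
  using MOP_of_unitriangular[of S k i, OF is_factorization_diag[OF assms(1)] assms(3)]
    MOP_of_unitriangular[of S' k i, OF is_factorization_diag[OF assms(2)] assms(3)]
  by (simp add: chi_comb_diff[symmetric])

lemma block_product_sum_eq_functional:
  fixes u :: "'v::{finite,linorder} mpoly \<Rightarrow> complex"
  assumes lf: "linear_functional u"
    and car: "\<forall>k l. S k l \<in> carrier_mat (bsize TYPE('v) k) (bsize TYPE('v) l)"
    and ij: "i < bsize TYPE('v) k" "j < bsize TYPE('v) l"
  shows "(\<Sum>a\<le>k. \<Sum>b\<le>l. (S k a * Gblock u a b * (S l b)\<^sup>T) $$ (i,j))
         = u ((MOP_of S k i :: 'v mpoly) * MOP_of S l j)"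
proof -
  let ?F = "\<lambda>a b c d. S k a $$ (i,c) * (S l b $$ (j,d) * u (chi b d * chi a c))"
  have entry: "(S k a * Gblock u a b * (S l b)\<^sup>T) $$ (i,j) =
     (\<Sum>d<bsize TYPE('v) b. \<Sum>c<bsize TYPE('v) a. ?F a b c d)" for a b
  proof -
    have "dim_row (S k a) = bsize TYPE('v) k" "dim_col (S k a) = bsize TYPE('v) a"
      "dim_row (S l b) = bsize TYPE('v) l" "dim_col (S l b) = bsize TYPE('v) b"
      using car by (auto dest: spec[of _ k] spec[of _ l])
    then have "(S k a * Gblock u a b * (S l b)\<^sup>T) $$ (i,j) = (\<Sum>d<bsize TYPE('v) b.
        \<Sum>c<bsize TYPE('v) a. S k a $$ (i,c) * u (chi a c * chi b d) * S l b $$ (j,d))"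
      using ij by (simp add: Gblock_def scalar_prod_def atLeast0LessThan sum_distrib_right)
    moreover have "S k a $$ (i,c) * u (chi a c * chi b d) * S l b $$ (j,d) = ?F a b c d" for c d
      using mult.commute[of "chi a c" "chi b d"] by (simp only: mult_ac)
    ultimately show ?thesis by simp
  qed
  have "(\<Sum>a\<le>k. \<Sum>b\<le>l. (S k a * Gblock u a b * (S l b)\<^sup>T) $$ (i,j)) =
        (\<Sum>a\<le>k. \<Sum>b\<le>l. \<Sum>d<bsize TYPE('v) b. \<Sum>c<bsize TYPE('v) a. ?F a b c d)"
    by (simp only: entry)
  also have "\<dots> = (\<Sum>a\<le>k. \<Sum>b\<le>l. \<Sum>c<bsize TYPE('v) a. \<Sum>d<bsize TYPE('v) b. ?F a b c d)"
    by (rule sum.cong[OF refl], rule sum.cong[OF refl], rule sum.swap)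
  also have "\<dots> = (\<Sum>a\<le>k. \<Sum>c<bsize TYPE('v) a. \<Sum>b\<le>l. \<Sum>d<bsize TYPE('v) b. ?F a b c d)"
    by (rule sum.cong[OF refl], rule sum.swap)
  also have "\<dots> = u ((MOP_of S k i :: 'v mpoly) * MOP_of S l j)"
    unfolding MOP_of_def functional_chi_comb_mult[OF lf] unfolding functional_mult_chi_comb[OF lf]
    by (simp only: lessThan_Suc_atMost sum_distrib_left)
  finally show ?thesis .
qed

lemma is_factorization_orthogonal:
  fixes u :: "'v::{finite,linorder} mpoly \<Rightarrow> complex"
  assumes lf: "linear_functional u" and f: "is_factorization u S H"
    and ij: "i < bsize TYPE('v) k" "j < bsize TYPE('v) l"
  shows "u ((MOP_of S k i :: 'v mpoly) * MOP_of S l j) = (if k = l then H k $$ (i,j) else 0)"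
proof -
  have car: "\<forall>k l. S k l \<in> carrier_mat (bsize TYPE('v) k) (bsize TYPE('v) l)"
    using f by (simp add: is_factorization_def)
  have "(\<Sum>a\<le>k. \<Sum>b\<le>l. (S k a * Gblock u a b * (S l b)\<^sup>T) $$ (i,j)) =
      (if k = l then H k $$ (i,j) else 0)"
    using f ij unfolding is_factorization_def by blast
  then show ?thesis using block_product_sum_eq_functional[OF lf car ij] by simp
qed

text \<open>Strong induction on \<open>l\<close>, since \<open>\<chi>\<^sub>[\<^sub>l\<^sub>] = P\<^sub>[\<^sub>l\<^sub>] - (terms of degree below l)\<close>.\<close>

lemma orthogonal_chi_if_orthogonal_MOP_of:
  fixes u :: "'v::{finite,linorder} mpoly \<Rightarrow> complex"
  assumes lf: "linear_functional u" and diag: "\<forall>k. S k k = 1\<^sub>m (bsize TYPE('v) k)"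
    and orth: "\<forall>l<N. \<forall>c<bsize TYPE('v) l. u (q * MOP_of S l c) = 0"
  shows "l < N \<Longrightarrow> c < bsize TYPE('v) l \<Longrightarrow> u (q * chi l c) = 0"
proof (induction l arbitrary: c rule: less_induct)
  case (less l)
  have "chi l c = (MOP_of S l c :: 'v mpoly) - chi_comb l (\<lambda>m j. S l m $$ (c,j))"
    using MOP_of_unitriangular[of S l c, OF diag[rule_format] less.prems(2)] by simp
  then have "u (q * chi l c) = u (q * MOP_of S l c) - u (q * chi_comb l (\<lambda>m j. S l m $$ (c,j)))"
    by (simp add: right_diff_distrib linear_functional_diff[OF lf])
  also have "u (q * chi_comb l (\<lambda>m j. S l m $$ (c,j))) = 0"
    using less.IH less.prems by (intro functional_mult_chi_comb_eq_0[OF lf, where k=l]) auto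
  finally show ?case using orth less.prems by simp
qed

lemma MOP_of_orthogonal_chi:
  fixes u :: "'v::{finite,linorder} mpoly \<Rightarrow> complex"
  assumes lf: "linear_functional u" and f: "is_factorization u S H"
    and "l < k" "i < bsize TYPE('v) k" "c < bsize TYPE('v) l"
  shows "u ((MOP_of S k i :: 'v mpoly) * chi l c) = 0"
  using orthogonal_chi_if_orthogonal_MOP_of[OF lf, of S k "MOP_of S k i" l c]
    is_factorization_orthogonal[OF lf f] is_factorization_diag[OF f] assms(3-)
  by auto

lemma MOP_of_orthogonal_deg_less:
  fixes u :: "'v::{finite,linorder} mpoly \<Rightarrow> complex"
  assumes lf: "linear_functional u" and f: "is_factorization u S H"
    and "i < bsize TYPE('v) k" "N \<le> k"
  shows "u ((MOP_of S k i :: 'v mpoly) * chi_comb N d) = 0"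
  using MOP_of_orthogonal_chi[OF lf f _ assms(3)] assms(4)
  by (intro functional_mult_chi_comb_eq_0[OF lf, where k=k]) auto

section \<open>Existence and uniqueness of the factorization\<close>

lemma is_factorization_unique_S:
  fixes u :: "'v::{finite,linorder} mpoly \<Rightarrow> complex"
  assumes lf: "linear_functional u" and qd: "quasi_definite u"
    and f1: "is_factorization u S H" and f2: "is_factorization u S' H'"
  shows "S k m = S' k m"
proof -
  have c1: "S k m \<in> carrier_mat (bsize TYPE('v) k) (bsize TYPE('v) m)"
    and c2: "S' k m \<in> carrier_mat (bsize TYPE('v) k) (bsize TYPE('v) m)"
    using f1 f2 by (auto simp: is_factorization_def)
  show ?thesis
  proof (cases "m < k")
    case True
    show ?thesis
    proof (rule eq_matI)
      fix i j assume "i < dim_row (S' k m)" "j < dim_col (S' k m)"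
      then have ij: "i < bsize TYPE('v) k" "j < bsize TYPE('v) m" using c2 by auto
      let ?d = "\<lambda>m j. S k m $$ (i,j) - S' k m $$ (i,j)"
      have "u (chi_comb k ?d * chi l c) = 0" if "l < k" "c < bsize TYPE('v) l" for l c
        using MOP_of_orthogonal_chi[OF lf f1 that(1) ij(1) that(2)]
          MOP_of_orthogonal_chi[OF lf f2 that(1) ij(1) that(2)]
        unfolding MOP_of_diff[OF f1 f2 ij(1), symmetric]
        by (simp add: left_diff_distrib linear_functional_diff[OF lf])
      then have "?d m j = 0"
        using quasi_definite_orthogonal_chi_comb_coeff[OF lf qd, of k ?d m j] True ij by blast
      then show "S k m $$ (i,j) = S' k m $$ (i,j)" by simp
    qed (use c1 c2 in auto)
  next
    case False
    then show ?thesis using f1 f2 by (cases "m = k") (simp_all add: is_factorization_def)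
  qed
qed

lemma is_factorization_unique:
  fixes u :: "'v::{finite,linorder} mpoly \<Rightarrow> complex"
  assumes lf: "linear_functional u" and qd: "quasi_definite u"
    and f1: "is_factorization u S H" and f2: "is_factorization u S' H'"
  shows "S = S' \<and> H = H'"
proof -
  have S: "S = S'" using is_factorization_unique_S[OF assms] by (intro ext)
  have "H k = H' k" for k
  proof -
    have c1: "H k \<in> carrier_mat (bsize TYPE('v) k) (bsize TYPE('v) k)"
      and c2: "H' k \<in> carrier_mat (bsize TYPE('v) k) (bsize TYPE('v) k)"
      using f1 f2 by (auto simp: is_factorization_def)
    show ?thesis
    proof (rule eq_matI)
      fix i j assume "i < dim_row (H' k)" "j < dim_col (H' k)"
      then have ij: "i < bsize TYPE('v) k" "j < bsize TYPE('v) k" using c2 by auto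
      show "H k $$ (i,j) = H' k $$ (i,j)"
        using is_factorization_orthogonal[OF lf f1 ij] is_factorization_orthogonal[OF lf f2 ij] S
        by simp
    qed (use c1 c2 in auto)
  qed
  with S show ?thesis by auto
qed

lemma mat_inverse_if_det_nonzero:
  assumes A: "A \<in> carrier_mat n n" and "det A \<noteq> (0::complex)"
  shows "A * the (mat_inverse A) = 1\<^sub>m n" "the (mat_inverse A) * A = 1\<^sub>m n"
    "the (mat_inverse A) \<in> carrier_mat n n"
proof -
  have "A \<in> Units (ring_mat TYPE(complex) n n)" by (rule det_non_zero_imp_unit[OF assms])
  then obtain B where "mat_inverse A = Some B" using mat_inverse(1)[OF A, where b=n] by fastforce
  then show "A * the (mat_inverse A) = 1\<^sub>m n" "the (mat_inverse A) * A = 1\<^sub>m n"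
    "the (mat_inverse A) \<in> carrier_mat n n"
    using mat_inverse(2)[OF A] by simp_all
qed

text \<open>The lower-degree coefficients of the monic orthogonal polynomial solve the linear
 system with the truncated moment matrix \<open>G\<^sup>[\<^sup>n\<^sup>]\<close>.\<close>

lemma orthogonal_completion_exists:
  fixes u :: "'v::{finite,linorder} mpoly \<Rightarrow> complex"
  assumes lf: "linear_functional u" and qd: "quasi_definite u"
  shows "\<exists>d. \<forall>k<n. \<forall>c<bsize TYPE('v) k. u ((chi_comb n d + chi n i) * chi k c) = 0"
proof -
  let ?G = "Gtrunc u n" and ?off = "boff TYPE('v)"
  define r where "r = vec (?off n) (\<lambda>h. - u (chi n i * chi (blk TYPE('v) h) (h - ?off (blk TYPE('v) h))))"
  define s where "s = the (mat_inverse ?G) *\<^sub>v r"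
  have G: "?G \<in> carrier_mat (?off n) (?off n)" by (simp add: Gtrunc_def)
  note inv = mat_inverse_if_det_nonzero[OF G qd[unfolded quasi_definite_def, rule_format]]
  have "?G *\<^sub>v s = (?G * the (mat_inverse ?G)) *\<^sub>v r"
    unfolding s_def by (rule assoc_mult_mat_vec[symmetric, OF G inv(3)]) (simp add: r_def)
  then have Gs: "?G *\<^sub>v s = r" by (simp add: inv(1) r_def)
  have "u (chi_comb n (\<lambda>m j. s $ (?off m + j)) * chi k c) = - u (chi n i * chi k c)"
    if kc: "k < n" "c < bsize TYPE('v) k" for k c
  proof -
    have hb: "?off k + c < ?off n" using boff_add_less[OF kc] .
    have "u (chi_comb n (\<lambda>m j. s $ (?off m + j)) * chi k c) =
          (\<Sum>m<n. \<Sum>j<bsize TYPE('v) m. ?G $$ (?off k + c, ?off m + j) * s $ (?off m + j))"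
      unfolding functional_chi_comb_mult[OF lf]
      using kc by (intro sum.cong refl) (simp add: Gtrunc_boff_entry mult.commute)
    also have "\<dots> = (\<Sum>g<?off n. ?G $$ (?off k + c, g) * s $ g)"
      by (rule sum_lessThan_boff[symmetric])
    also have "\<dots> = (?G *\<^sub>v s) $ (?off k + c)"
      using hb G inv(3) by (simp add: s_def scalar_prod_def atLeast0LessThan)
    also have "\<dots> = - u (chi n i * chi k c)"
      using hb kc by (simp add: Gs r_def blk_boff_add)
    finally show ?thesis .
  qed
  then show ?thesis by (intro exI[of _ "\<lambda>m j. s $ (?off m + j)"]) (simp add: distrib_right
        linear_functional_add[OF lf])
qed

lemma is_factorization_exists:
  fixes u :: "'v::{finite,linorder} mpoly \<Rightarrow> complex"
  assumes lf: "linear_functional u" and qd: "quasi_definite u"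
  shows "\<exists>S H. is_factorization u S H"
proof -
  have "\<forall>n i. \<exists>d. \<forall>k<n. \<forall>c<bsize TYPE('v) k. u ((chi_comb n d + chi n i) * chi k c) = 0"
    using orthogonal_completion_exists[OF lf qd] by blast
  then obtain D where D: "\<And>n i k c. k < n \<Longrightarrow> c < bsize TYPE('v) k \<Longrightarrow>
      u ((chi_comb n (D n i) + chi n i) * chi k c) = 0"
    by metis
  define S where "S n m = (if m < n then mat (bsize TYPE('v) n) (bsize TYPE('v) m) (\<lambda>(i,j). D n i m j)
     else if m = n then 1\<^sub>m (bsize TYPE('v) n) else 0\<^sub>m (bsize TYPE('v) n) (bsize TYPE('v) m))" for n m
  define H where "H n = mat (bsize TYPE('v) n) (bsize TYPE('v) n)
     (\<lambda>(i,j). u ((MOP_of S n i :: 'v mpoly) * MOP_of S n j))" for n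
  have car: "\<forall>k l. S k l \<in> carrier_mat (bsize TYPE('v) k) (bsize TYPE('v) l)"
    by (simp add: S_def)
  have "(MOP_of S n i :: 'v mpoly) = chi_comb n (D n i) + chi n i" if "i < bsize TYPE('v) n" for n i
  proof -
    have "chi_comb n (\<lambda>m j. S n m $$ (i,j)) = (chi_comb n (D n i) :: 'v mpoly)"
      unfolding chi_comb_def using that by (intro sum.cong refl) (simp add: S_def)
    then show ?thesis using MOP_of_unitriangular[of S n i, OF _ that] by (simp add: S_def)
  qed
  then have orth: "u ((MOP_of S k i :: 'v mpoly) * MOP_of S l j) = 0"
    if "l < k" "i < bsize TYPE('v) k" for k l i j
    unfolding MOP_of_def[of S l j] using D that
    by (intro functional_mult_chi_comb_eq_0[OF lf, where k=k]) auto
  have "is_factorization u S H"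
    unfolding is_factorization_def
  proof (intro conjI allI impI)
    fix k l i j assume ij: "i < bsize TYPE('v) k" "j < bsize TYPE('v) l"
    have "u ((MOP_of S k i :: 'v mpoly) * MOP_of S l j) = (if k = l then H k $$ (i,j) else 0)"
      using ij orth[OF _ ij(1)] orth[OF _ ij(2)]
      by (cases k l rule: linorder_cases) (simp_all add: H_def mult.commute[of "MOP_of S l j"])
    then show "(\<Sum>a\<le>k. \<Sum>b\<le>l. (S k a * Gblock u a b * (S l b)\<^sup>T) $$ (i, j)) =
      (if k = l then H k $$ (i, j) else 0)"
      using block_product_sum_eq_functional[OF lf car ij] by simp
  qed (auto simp: S_def H_def)
  then show ?thesis by blast
qed

lemma is_factorization_Sfac_Hfac:
  fixes u :: "'v::{finite,linorder} mpoly \<Rightarrow> complex"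
  assumes lf: "linear_functional u" and qd: "quasi_definite u"
  shows "is_factorization u (Sfac u) (Hfac u)"
proof -
  obtain S H where f: "is_factorization u S H" using is_factorization_exists[OF lf qd] by blast
  have "Sfac u = S" unfolding Sfac_def
    using f is_factorization_unique[OF lf qd f] by (intro the_equality) blast+
  moreover have "Hfac u = H" unfolding Hfac_def
    using f is_factorization_unique[OF lf qd f] by (intro the_equality) blast+
  ultimately show ?thesis using f by simp
qed

lemma MOP_of_comb_orthogonal_imp_zero:
  fixes u :: "'v::{finite,linorder} mpoly \<Rightarrow> complex"
  assumes lf: "linear_functional u" and qd: "quasi_definite u" and f: "is_factorization u S H"
    and w: "w \<in> carrier_vec (bsize TYPE('v) k)"
    and orth: "\<forall>l\<le>k. \<forall>c<bsize TYPE('v) l.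
      u ((\<Sum>j<bsize TYPE('v) k. cpoly (w $ j) * MOP_of S k j) * MOP_of S l c) = 0"
  shows "w = 0\<^sub>v (bsize TYPE('v) k)"
proof (rule eq_vecI)
  fix e assume "e < dim_vec (0\<^sub>v (bsize TYPE('v) k) :: complex vec)"
  then have e: "e < bsize TYPE('v) k" by simp
  define d where "d l c = (\<Sum>j<bsize TYPE('v) k. w $ j * S k l $$ (j,c))" for l c
  have "(\<Sum>j<bsize TYPE('v) k. cpoly (w $ j) * MOP_of S k j) = (chi_comb (Suc k) d :: 'v mpoly)"
    unfolding MOP_of_def cpoly_mult_chi_comb sum_chi_comb d_def ..
  with orth have "\<forall>l<Suc k. \<forall>c<bsize TYPE('v) l. u (chi_comb (Suc k) d * MOP_of S l c) = 0"
    by (simp add: less_Suc_eq_le)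
  then have "\<forall>l<Suc k. \<forall>c<bsize TYPE('v) l. u (chi_comb (Suc k) d * chi l c) = 0"
    using orthogonal_chi_if_orthogonal_MOP_of[OF lf] is_factorization_diag[OF f] by blast
  then have "d k e = 0" using quasi_definite_orthogonal_chi_comb_coeff[OF lf qd, of "Suc k" d k e] e
    by simp
  moreover have "d k e = w $ e"
    using e by (simp add: d_def is_factorization_diag[OF f] if_distrib[of "\<lambda>x. _ * x"] cong: if_cong)
  ultimately show "w $ e = 0\<^sub>v (bsize TYPE('v) k) $ e" using e by simp
qed (use w in simp)

lemma det_factorization_block_nonzero:
  fixes u :: "'v::{finite,linorder} mpoly \<Rightarrow> complex"
  assumes lf: "linear_functional u" and qd: "quasi_definite u" and f: "is_factorization u S H"
  shows "det (H k) \<noteq> 0"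
proof
  assume "det (H k) = 0"
  moreover have Hk: "H k \<in> carrier_mat (bsize TYPE('v) k) (bsize TYPE('v) k)"
    using f by (simp add: is_factorization_def)
  ultimately obtain w where w: "w \<in> carrier_vec (bsize TYPE('v) k)" "w \<noteq> 0\<^sub>v (bsize TYPE('v) k)"
    "H k *\<^sub>v w = 0\<^sub>v (bsize TYPE('v) k)"
    using det_0_iff_vec_prod_zero by blast
  let ?Q = "\<Sum>j<bsize TYPE('v) k. cpoly (w $ j) * MOP_of S k j :: 'v mpoly"
  have "u (?Q * MOP_of S l c) = 0" if "l \<le> k" "c < bsize TYPE('v) l" for l c
  proof -
    have "u (?Q * MOP_of S l c) = u (MOP_of S l c * ?Q)" by (simp only: mult.commute)
    also have "\<dots> = (\<Sum>j<bsize TYPE('v) k. w $ j * u (MOP_of S l c * MOP_of S k j))"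
      unfolding sum_distrib_left linear_functional_sum[OF lf] mult.left_commute[of "MOP_of S l c"]
        linear_functional_cpoly_mult[OF lf] ..
    also have "\<dots> = (if l = k then (H k *\<^sub>v w) $ c else 0)"
      using that Hk w(1) is_factorization_orthogonal[OF lf f that(2)]
      by (auto simp: scalar_prod_def atLeast0LessThan mult.commute intro!: sum.cong)
    also have "\<dots> = 0" using w(3) that by auto
    finally show ?thesis .
  qed
  then have "w = 0\<^sub>v (bsize TYPE('v) k)"
    by (intro MOP_of_comb_orthogonal_imp_zero[OF lf qd f w(1)]) blast
  with w(2) show False ..
qed

lemma factorization_block_inverse:
  fixes u :: "'v::{finite,linorder} mpoly \<Rightarrow> complex"
  assumes lf: "linear_functional u" and qd: "quasi_definite u" and f: "is_factorization u S H"
  shows "the (mat_inverse (H k)) * H k = 1\<^sub>m (bsize TYPE('v) k)"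
    "the (mat_inverse (H k)) \<in> carrier_mat (bsize TYPE('v) k) (bsize TYPE('v) k)"
  using mat_inverse_if_det_nonzero[OF _ det_factorization_block_nonzero[OF lf qd f]] f
  by (auto simp: is_factorization_def)

lemma functional_MOP_of_expansion_mult:
  fixes u :: "'v::{finite,linorder} mpoly \<Rightarrow> complex"
  assumes lf: "linear_functional u" and qd: "quasi_definite u" and f: "is_factorization u S H"
    and kc: "k < n" "c < bsize TYPE('v) k"
  shows "u ((\<Sum>m<n. \<Sum>a<bsize TYPE('v) m. \<Sum>b<bsize TYPE('v) m.
      cpoly (cf m a * the (mat_inverse (H m)) $$ (a,b)) * MOP_of S m b) * MOP_of S k c) = cf k c"
proof -
  define Hi where "Hi m = the (mat_inverse (H m))" for m
  have Hk: "H k \<in> carrier_mat (bsize TYPE('v) k) (bsize TYPE('v) k)"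
    using f by (simp add: is_factorization_def)
  have "u ((\<Sum>m<n. \<Sum>a<bsize TYPE('v) m. \<Sum>b<bsize TYPE('v) m.
      cpoly (cf m a * Hi m $$ (a,b)) * MOP_of S m b) * MOP_of S k c) =
      (\<Sum>m<n. \<Sum>a<bsize TYPE('v) m. \<Sum>b<bsize TYPE('v) m.
        cf m a * Hi m $$ (a,b) * u (MOP_of S m b * (MOP_of S k c :: 'v mpoly)))"
    unfolding sum_distrib_right linear_functional_sum[OF lf] mult.assoc
      linear_functional_cpoly_mult[OF lf] ..
  also have "\<dots> = (\<Sum>m<n. if m = k then (\<Sum>a<bsize TYPE('v) k. \<Sum>b<bsize TYPE('v) k.
      cf k a * (Hi k $$ (a,b) * H k $$ (b,c))) else 0)"
    using is_factorization_orthogonal[OF lf f _ kc(2)] by (intro sum.cong refl) (auto simp: mult.assoc)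
  also have "\<dots> = (\<Sum>a<bsize TYPE('v) k. cf k a * (\<Sum>b<bsize TYPE('v) k. Hi k $$ (a,b) * H k $$ (b,c)))"
    using kc by (simp add: sum_distrib_left)
  also have "\<dots> = (\<Sum>a<bsize TYPE('v) k. cf k a * (Hi k * H k) $$ (a,c))"
    using factorization_block_inverse(2)[OF lf qd f, of k] Hk kc
    by (intro sum.cong refl) (simp add: Hi_def scalar_prod_def atLeast0LessThan)
  also have "\<dots> = cf k c"
    using factorization_block_inverse(1)[OF lf qd f, of k] kc
    by (simp add: Hi_def if_distrib[of "\<lambda>x. _ * x"] cong: if_cong)
  finally show ?thesis unfolding Hi_def .
qed

section \<open>The connection formulas\<close>

lemma factorization_block_connection:
  fixes u v :: "'v::{finite,linorder} mpoly \<Rightarrow> complex"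
  assumes lf: "linear_functional u" and lv: "linear_functional v"
    and f: "is_factorization u S H" and fh: "is_factorization (\<lambda>p. u p + v p) Sh Hh"
    and ij: "i < bsize TYPE('v) n" "j < bsize TYPE('v) n"
  shows "Hh n $$ (i,j) = H n $$ (i,j) + v ((MOP_of Sh n i :: 'v mpoly) * MOP_of S n j)"
proof -
  let ?w = "\<lambda>p. u p + v p"
  have lfw: "linear_functional ?w" by (rule linear_functional_plus[OF lf lv])
  let ?P = "MOP_of S :: nat \<Rightarrow> nat \<Rightarrow> 'v mpoly" and ?Ph = "MOP_of Sh :: nat \<Rightarrow> nat \<Rightarrow> 'v mpoly"
  have Ph: "?Ph n a = ?P n a + chi_comb n (\<lambda>m e. Sh n m $$ (a,e) - S n m $$ (a,e))"
    if "a < bsize TYPE('v) n" for a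
    using MOP_of_diff[OF fh f that] by (simp add: algebra_simps)
  have "Hh n $$ (i,j) = ?w (?Ph n i * ?Ph n j)"
    using is_factorization_orthogonal[OF lfw fh ij] by simp
  also have "\<dots> = ?w (?Ph n i * ?P n j)"
    unfolding Ph[OF ij(2)] distrib_left linear_functional_add[OF lfw]
      MOP_of_orthogonal_deg_less[OF lfw fh ij(1) order.refl] by simp
  also have "u (?Ph n i * ?P n j) = u (?P n j * ?P n i)"
    unfolding Ph[OF ij(1)] mult.commute[of _ "?P n j"] distrib_left linear_functional_add[OF lf]
      MOP_of_orthogonal_deg_less[OF lf f ij(2) order.refl] by simp
  also have "\<dots> = H n $$ (i,j)"
    using is_factorization_orthogonal[OF lf f ij] by (simp add: mult.commute)
  finally show ?thesis by simp
qed

text \<open>The difference \<open>D\<close> of both sides has degree below \<open>n\<close> and is \<open>u\<close>-orthogonal to every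
 \<open>P\<^sub>[\<^sub>k\<^sub>]\<close>, \<open>k < n\<close>, hence vanishes by quasi-definiteness.\<close>

lemma MOP_of_connection:
  fixes u v :: "'v::{finite,linorder} mpoly \<Rightarrow> complex"
  assumes lf: "linear_functional u" and lv: "linear_functional v" and qd: "quasi_definite u"
    and f: "is_factorization u S H" and fh: "is_factorization (\<lambda>p. u p + v p) Sh Hh"
    and i: "i < bsize TYPE('v) n"
  shows "(MOP_of Sh n i :: 'v mpoly) = MOP_of S n i -
     (\<Sum>m<n. \<Sum>a<bsize TYPE('v) m. \<Sum>b<bsize TYPE('v) m.
        cpoly (v (MOP_of Sh n i * MOP_of S m a) * the (mat_inverse (H m)) $$ (a,b)) * MOP_of S m b)"
proof -
  let ?w = "\<lambda>p. u p + v p"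
  have lfw: "linear_functional ?w" by (rule linear_functional_plus[OF lf lv])
  let ?P = "MOP_of S :: nat \<Rightarrow> nat \<Rightarrow> 'v mpoly" and ?Ph = "MOP_of Sh :: nat \<Rightarrow> nat \<Rightarrow> 'v mpoly"
  define cf where "cf m a = v (?Ph n i * ?P m a)" for m a
  define Hi where "Hi m = the (mat_inverse (H m))" for m
  define R where "R = (\<Sum>m<n. \<Sum>a<bsize TYPE('v) m. \<Sum>b<bsize TYPE('v) m.
        cpoly (cf m a * Hi m $$ (a,b)) * ?P m b)"
  define D where "D = ?Ph n i - ?P n i + R"
  have "deg_less n (?Ph n i - ?P n i)"
    unfolding deg_less_def using MOP_of_diff[OF fh f i] by blast
  moreover have "deg_less n R" unfolding R_def
    by (intro deg_less_sum deg_less_cpoly_mult deg_less_MOP_of) auto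
  ultimately have "deg_less n D" unfolding D_def by (rule deg_less_add)
  then obtain d where D_eq: "D = chi_comb n d" unfolding deg_less_def by blast
  have "u (D * ?P k c) = 0" if kc: "k < n" "c < bsize TYPE('v) k" for k c
  proof -
    have "?w (?Ph n i * ?P k c) = 0"
      unfolding MOP_of_def[of S k c] using kc by (intro MOP_of_orthogonal_deg_less[OF lfw fh i]) auto
    then have Ph_P: "u (?Ph n i * ?P k c) = - cf k c"
      by (simp add: cf_def eq_neg_iff_add_eq_0)
    have P_P: "u (?P n i * ?P k c) = 0"
      using is_factorization_orthogonal[OF lf f i kc(2)] kc by simp
    have "u (R * ?P k c) = cf k c"
      unfolding R_def Hi_def by (rule functional_MOP_of_expansion_mult[OF lf qd f kc])
    then show ?thesis unfolding D_def
      by (simp add: distrib_right left_diff_distrib linear_functional_add[OF lf]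
          linear_functional_diff[OF lf] Ph_P P_P)
  qed
  then have "\<forall>k<n. \<forall>c<bsize TYPE('v) k. u (chi_comb n d * chi k c) = 0"
    using orthogonal_chi_if_orthogonal_MOP_of[OF lf _, of S n D] is_factorization_diag[OF f] D_eq
    by (auto simp: mult.commute)
  note coeff_zero = quasi_definite_orthogonal_chi_comb_coeff[OF lf qd this]
  have "D = 0" unfolding D_eq chi_comb_def
    using coeff_zero by (intro sum.neutral ballI) auto
  then show ?thesis unfolding D_def R_def cf_def Hi_def by (simp add: algebra_simps eq_neg_iff_add_eq_0)
qed

lemma functional_mult_CD_kernel_y:
  fixes u v :: "'v::{finite,linorder} mpoly \<Rightarrow> complex"
  assumes lv: "linear_functional v"
  shows "v (p * CD_kernel_y u n x) = (\<Sum>m<n. \<Sum>a<bsize TYPE('v) m. \<Sum>b<bsize TYPE('v) m.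
    v (p * MOP_of (Sfac u) m a) * the (mat_inverse (Hfac u m)) $$ (a,b) *
      eval_mpoly (MOP_of (Sfac u) m b) x)"
  unfolding CD_kernel_y_def sum_distrib_left linear_functional_sum[OF lv]
proof (intro sum.cong refl)
  fix m a b assume "a \<in> {..<bsize TYPE('v) m}" "b \<in> {..<bsize TYPE('v) m}"
  then have P: "MOP u m $ a = MOP_of (Sfac u) m a" "MOP u m $ b = MOP_of (Sfac u) m b"
    by (simp_all add: MOP_eq_MOP_of)
  let ?c = "the (mat_inverse (Hfac u m)) $$ (a,b) * eval_mpoly (MOP u m $ b) x"
  have "p * (MOP u m $ a * cpoly ?c) = cpoly ?c * (p * MOP u m $ a)"
    by (simp only: mult_ac)
  then have "v (p * (MOP u m $ a * cpoly ?c)) = ?c * v (p * MOP u m $ a)"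
    by (simp only: linear_functional_cpoly_mult[OF lv])
  then show "v (p * (MOP u m $ a * cpoly ?c)) = v (p * MOP_of (Sfac u) m a) *
      the (mat_inverse (Hfac u m)) $$ (a,b) * eval_mpoly (MOP_of (Sfac u) m b) x"
    by (simp only: P mult_ac)
qed

theorem mainTheorem14:
  fixes u v :: "'v::{finite,linorder} mpoly \<Rightarrow> complex" and n :: nat
  assumes "linear_functional u" and "linear_functional v"
    and "quasi_definite u" and "quasi_definite (\<lambda>p. u p + v p)"
  shows "(\<forall>i<bsize TYPE('v) n. \<forall>x.
           eval_mpoly (MOP (\<lambda>p. u p + v p) n $ i) x =
           eval_mpoly (MOP u n $ i) x - v (MOP (\<lambda>p. u p + v p) n $ i * CD_kernel_y u n x))
         \<and> Hfac (\<lambda>p. u p + v p) n = Hfac u n +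
           mat (bsize TYPE('v) n) (bsize TYPE('v) n)
             (\<lambda>(i,j). v (MOP (\<lambda>p. u p + v p) n $ i * MOP u n $ j))"
proof -
  let ?w = "\<lambda>p. u p + v p"
  note lfw = linear_functional_plus[OF assms(1,2)]
  note f = is_factorization_Sfac_Hfac[OF assms(1,3)]
  note fh = is_factorization_Sfac_Hfac[OF lfw assms(4)]
  note ev = linear_functional_eval_mpoly
  have "eval_mpoly (MOP_of (Sfac ?w) n i) x =
      eval_mpoly (MOP_of (Sfac u) n i) x - v (MOP_of (Sfac ?w) n i * CD_kernel_y u n x)"
    if "i < bsize TYPE('v) n" for i x
    unfolding functional_mult_CD_kernel_y[OF assms(2)]
    by (subst MOP_of_connection[OF assms(1-3) f fh that])
      (simp add: linear_functional_diff[OF ev] linear_functional_sum[OF ev]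
        linear_functional_cpoly_mult[OF ev])
  moreover have "Hfac ?w n = Hfac u n + mat (bsize TYPE('v) n) (bsize TYPE('v) n)
      (\<lambda>(i,j). v (MOP ?w n $ i * MOP u n $ j))"
    using f fh factorization_block_connection[OF assms(1,2) f fh]
    by (intro eq_matI) (auto simp: is_factorization_def MOP_eq_MOP_of)
  ultimately show ?thesis by (simp add: MOP_eq_MOP_of)
qed

end
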